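(* Let $G$ be a graph that is well-separable with respect to a set $\mathcal P$ of robust principal $(k+1)$-profiles of $G$, where $k=\kappa(\mathcal P,G)$, such that $\mathcal R(k,\mathcal P)\neq\emptyset$. Then the set $\mathcal O(\mathcal P,G)$ is nested, canonical with respect to $\mathcal P$, and nonempty.
   Context: A separation of $G$ is an ordered pair $(A,B)$ of subsets of $V(G)$ with $A\cup B=V(G)$ and no edge between $A\setminus B$ and $B\setminus A$; its order is $|A\cap B|$. $(A,B)\le(C,D)$ means $A\subseteq C$, $D\subseteq B$; separations are nested if $(A,B)$ is comparable with $(C,D)$ or $(D,C)$, and cross otherwise. A profile is a set $P$ of separations with (P1) if $(C,D)\le(A,B)\in P$ then $(D,C)\notin P$, and (P2) if $(A,B),(C,D)\in P$ then $(B\cap D,A\cup C)\notin P$. $P$ is principal if for every family $((A_i,B_i))_{i\in I}$ in $P$ with all $A_i\cap B_i$ equal, $\bigcap_i(B_i\setminus A_i)\neq\emptyset$. $P$ is an $\ell$-profile if all its separations have order $<\ell$ and for each separation $(A,B)$ of order $<\ell$, $(A,B)\in P$ or $(B,A)\in P$. $P$ is robust if for every $(A,B)\in P$ and every separation $(C,D)$ of finite order, if $(B\cap C,A\cup D)$ and $(B\cap D,A\cup C)$ both have order $<|A\cap B|$ then one of them is not in $P$. A separation distinguishes $P,P'$ if it lies in one and its reverse in the other. $\kappa(\mathcal P,G)$ is the minimum order of a separation distinguishing two profiles of $\mathcal P$; $\mathcal R(k,\mathcal P)$ is the set of separations of finite order at most $k$ distinguishing two profiles of $\mathcal P$. A separation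 $(A,B)$ is left-connected if $G[A\setminus B]$ is connected; $\mathcal R_{\rm lc}(k,\mathcal P)$ is the set of left-connected separations in $\mathcal R(k,\mathcal P)$. The crossing number of $(A,B)$ in a set $\mathcal S$ is the number of elements of $\mathcal S$ crossing $(A,B)$. $\mathcal O(\mathcal P,G)$ is the set of separations in $\mathcal R_{\rm lc}(k,\mathcal P)$, $k=\kappa(\mathcal P,G)$, whose crossing number in $\mathcal R_{\rm lc}(k,\mathcal P)$ is minimum. A component $C$ of $G-(A\cap B)$ is degenerated if $N(C)\subsetneq A\cap B$; $G$ is well-separable w.r.t. $\mathcal P$ if no separation $(A,B)\in\mathcal R(\kappa(\mathcal P,G),\mathcal P)$ has a degenerated component of $G-(A\cap B)$. A set of separations constructed from $(G,\mathcal P)$ is canonical with respect to $\mathcal P$ if the construction commutes with isomorphisms: whenever $\varphi:G\to G'$ is an isomorphism mapping $\mathcal P$ to $\mathcal P'$, $\varphi$ maps the set constructed for $(G,\mathcal P)$ onto the set constructed for $(G',\mathcal P')$. *)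

theory Defs
  imports Main "HOL-Library.Extended_Nat"
begin

definition graph :: "'a set \<Rightarrow> ('a \<Rightarrow> 'a \<Rightarrow> bool) \<Rightarrow> bool" where
  "graph V E \<longleftrightarrow> (\<forall>x y. E x y \<longrightarrow> x \<in> V \<and> y \<in> V) \<and> (\<forall>x y. E x y \<longrightarrow> E y x) \<and> (\<forall>x. \<not> E x x)"

type_synonym 'a sep = "'a set \<times> 'a set"

definition is_sep :: "'a set \<Rightarrow> ('a \<Rightarrow> 'a \<Rightarrow> bool) \<Rightarrow> 'a sep \<Rightarrow> bool" where
  "is_sep V E s \<longleftrightarrow> fst s \<union> snd s = V \<and>
     \<not> (\<exists>x \<in> fst s - snd s. \<exists>y \<in> snd s - fst s. E x y)"

definition sep_ord :: "'a sep \<Rightarrow> enat" where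
  "sep_ord s = (if finite (fst s \<inter> snd s) then enat (card (fst s \<inter> snd s)) else \<infinity>)"

definition rev_sep :: "'a sep \<Rightarrow> 'a sep" where
  "rev_sep s = (snd s, fst s)"

definition sep_le :: "'a sep \<Rightarrow> 'a sep \<Rightarrow> bool" where
  "sep_le s t \<longleftrightarrow> fst s \<subseteq> fst t \<and> snd t \<subseteq> snd s"

definition nested :: "'a sep \<Rightarrow> 'a sep \<Rightarrow> bool" where
  "nested s t \<longleftrightarrow> sep_le s t \<or> sep_le t s \<or> sep_le s (rev_sep t) \<or> sep_le (rev_sep t) s"

definition crosses :: "'a sep \<Rightarrow> 'a sep \<Rightarrow> bool" where
  "crosses s t \<longleftrightarrow> \<not> nested s t"

definition nested_set :: "'a sep set \<Rightarrow> bool" where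
  "nested_set S \<longleftrightarrow> (\<forall>s \<in> S. \<forall>t \<in> S. nested s t)"

definition is_profile :: "'a set \<Rightarrow> ('a \<Rightarrow> 'a \<Rightarrow> bool) \<Rightarrow> 'a sep set \<Rightarrow> bool" where
  "is_profile V E P \<longleftrightarrow> (\<forall>s \<in> P. is_sep V E s) \<and>
     (\<forall>A B C D. (A, B) \<in> P \<and> sep_le (C, D) (A, B) \<longrightarrow> (D, C) \<notin> P) \<and>
     (\<forall>A B C D. (A, B) \<in> P \<and> (C, D) \<in> P \<longrightarrow> (B \<inter> D, A \<union> C) \<notin> P)"

definition principal_profile :: "'a sep set \<Rightarrow> bool" where
  "principal_profile P \<longleftrightarrow> (\<forall>S X. S \<subseteq> P \<and> S \<noteq> {} \<and> (\<forall>s \<in> S. fst s \<inter> snd s = X) \<longrightarrow>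
       (\<Inter>s \<in> S. snd s - fst s) \<noteq> {})"

definition l_profile :: "'a set \<Rightarrow> ('a \<Rightarrow> 'a \<Rightarrow> bool) \<Rightarrow> nat \<Rightarrow> 'a sep set \<Rightarrow> bool" where
  "l_profile V E l P \<longleftrightarrow> is_profile V E P \<and> (\<forall>s \<in> P. sep_ord s < enat l) \<and>
     (\<forall>s. is_sep V E s \<and> sep_ord s < enat l \<longrightarrow> s \<in> P \<or> rev_sep s \<in> P)"

definition robust :: "'a set \<Rightarrow> ('a \<Rightarrow> 'a \<Rightarrow> bool) \<Rightarrow> 'a sep set \<Rightarrow> bool" where
  "robust V E P \<longleftrightarrow> (\<forall>A B C D. (A, B) \<in> P \<and> is_sep V E (C, D) \<and> sep_ord (C, D) < \<infinity> \<and>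
       sep_ord (B \<inter> C, A \<union> D) < sep_ord (A, B) \<and> sep_ord (B \<inter> D, A \<union> C) < sep_ord (A, B) \<longrightarrow>
       (B \<inter> C, A \<union> D) \<notin> P \<or> (B \<inter> D, A \<union> C) \<notin> P)"

definition distinguishes :: "'a sep \<Rightarrow> 'a sep set \<Rightarrow> 'a sep set \<Rightarrow> bool" where
  "distinguishes s P P' \<longleftrightarrow> (s \<in> P \<and> rev_sep s \<in> P') \<or> (rev_sep s \<in> P \<and> s \<in> P')"

definition distinguishes_some :: "'a sep set set \<Rightarrow> 'a sep \<Rightarrow> bool" where
  "distinguishes_some \<P> s \<longleftrightarrow> (\<exists>P \<in> \<P>. \<exists>P' \<in> \<P>. distinguishes s P P')"

definition kappa :: "'a set \<Rightarrow> ('a \<Rightarrow> 'a \<Rightarrow> bool) \<Rightarrow> 'a sep set set \<Rightarrow> enat" where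
  "kappa V E \<P> = Inf (sep_ord ` {s. is_sep V E s \<and> distinguishes_some \<P> s})"

definition R :: "'a set \<Rightarrow> ('a \<Rightarrow> 'a \<Rightarrow> bool) \<Rightarrow> enat \<Rightarrow> 'a sep set set \<Rightarrow> 'a sep set" where
  "R V E k \<P> = {s. is_sep V E s \<and> sep_ord s < \<infinity> \<and> sep_ord s \<le> k \<and> distinguishes_some \<P> s}"

definition connected_in :: "('a \<Rightarrow> 'a \<Rightarrow> bool) \<Rightarrow> 'a set \<Rightarrow> bool" where
  "connected_in E S \<longleftrightarrow> S \<noteq> {} \<and>
     (\<forall>x \<in> S. \<forall>y \<in> S. (\<lambda>u v. u \<in> S \<and> v \<in> S \<and> E u v)\<^sup>*\<^sup>* x y)"

definition left_connected :: "('a \<Rightarrow> 'a \<Rightarrow> bool) \<Rightarrow> 'a sep \<Rightarrow> bool" where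
  "left_connected E s \<longleftrightarrow> connected_in E (fst s - snd s)"

definition R_lc :: "'a set \<Rightarrow> ('a \<Rightarrow> 'a \<Rightarrow> bool) \<Rightarrow> enat \<Rightarrow> 'a sep set set \<Rightarrow> 'a sep set" where
  "R_lc V E k \<P> = {s \<in> R V E k \<P>. left_connected E s}"

(* the set of elements of S crossing s; its cardinality is the crossing number *)
definition crossing_set :: "'a sep set \<Rightarrow> 'a sep \<Rightarrow> 'a sep set" where
  "crossing_set S s = {t \<in> S. crosses t s}"

definition card_le :: "'b set \<Rightarrow> 'c set \<Rightarrow> bool" where
  "card_le X Y \<longleftrightarrow> (\<exists>f. inj_on f X \<and> f ` X \<subseteq> Y)"

definition O_set :: "'a set \<Rightarrow> ('a \<Rightarrow> 'a \<Rightarrow> bool) \<Rightarrow> 'a sep set set \<Rightarrow> 'a sep set" where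
  "O_set V E \<P> = (let S = R_lc V E (kappa V E \<P>) \<P> in
     {s \<in> S. \<forall>t \<in> S. card_le (crossing_set S s) (crossing_set S t)})"

definition component_of :: "'a set \<Rightarrow> ('a \<Rightarrow> 'a \<Rightarrow> bool) \<Rightarrow> 'a set \<Rightarrow> 'a set \<Rightarrow> bool" where
  "component_of V E X C \<longleftrightarrow> C \<subseteq> V - X \<and> connected_in E C \<and>
     (\<forall>x \<in> C. \<forall>y \<in> V - X. E x y \<longrightarrow> y \<in> C)"

definition nbhd :: "'a set \<Rightarrow> ('a \<Rightarrow> 'a \<Rightarrow> bool) \<Rightarrow> 'a set \<Rightarrow> 'a set" where
  "nbhd V E C = {y \<in> V - C. \<exists>x \<in> C. E x y}"

definition well_separable :: "'a set \<Rightarrow> ('a \<Rightarrow> 'a \<Rightarrow> bool) \<Rightarrow> 'a sep set set \<Rightarrow> bool" where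
  "well_separable V E \<P> \<longleftrightarrow> \<not> (\<exists>s \<in> R V E (kappa V E \<P>) \<P>. \<exists>C.
     component_of V E (fst s \<inter> snd s) C \<and> nbhd V E C \<subset> fst s \<inter> snd s)"

definition map_sep :: "('a \<Rightarrow> 'b) \<Rightarrow> 'a sep \<Rightarrow> 'b sep" where
  "map_sep f s = (f ` fst s, f ` snd s)"

definition graph_iso :: "('a \<Rightarrow> 'b) \<Rightarrow> 'a set \<Rightarrow> ('a \<Rightarrow> 'a \<Rightarrow> bool) \<Rightarrow> 'b set \<Rightarrow> ('b \<Rightarrow> 'b \<Rightarrow> bool) \<Rightarrow> bool" where
  "graph_iso f V E V' E' \<longleftrightarrow> bij_betw f V V' \<and> (\<forall>x \<in> V. \<forall>y \<in> V. E x y \<longleftrightarrow> E' (f x) (f y))"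

end

(*
  Every separation in R(k, P) has order exactly k, and well-separability makes every component of
  G minus its separator adjacent to the whole separator. Cutting a separation of R(k, P) down to
  the component that the principal profile on its small side points to gives an element of
  R_lc(k, P) crossing no more elements of R_lc(k, P); hence O(P, G) is nonempty. If two elements of
  O(P, G) crossed, two opposite corners of them would again lie in R(k, P) by submodularity, and
  after cutting them down their crossing numbers would add up to less than those of the two
  crossing separations. Crossing numbers are finite because an element of R_lc(k, P) crossing r is
  determined by a vertex and a minimal separator of order k between two vertices of the separator
  of r. Canonicity holds because every ingredient is invariant under isomorphisms.
*)

theory Submission
  imports Defs
begin

section \<open>Reachability and components\<close>

definition reach :: "'a set \<Rightarrow> ('a \<Rightarrow> 'a \<Rightarrow> bool) \<Rightarrow> 'a \<Rightarrow> 'a \<Rightarrow> bool" where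
  "reach U E = (\<lambda>u v. u \<in> U \<and> v \<in> U \<and> E u v)\<^sup>*\<^sup>*"

definition conn_comp :: "'a set \<Rightarrow> ('a \<Rightarrow> 'a \<Rightarrow> bool) \<Rightarrow> 'a \<Rightarrow> 'a set" where
  "conn_comp U E x = {y. reach U E x y}"

lemma reach_refl [simp]: "reach U E x x"
  by (simp add: reach_def)

lemma reach_mono: "U \<subseteq> U' \<Longrightarrow> reach U E x y \<Longrightarrow> reach U' E x y"
  unfolding reach_def by (erule rtranclp_mono[THEN predicate2D, rotated]) auto

lemma reach_closed: "reach U E x y \<Longrightarrow> x \<in> U \<Longrightarrow> y \<in> U"
  unfolding reach_def by (induction rule: rtranclp_induct) auto

lemma reach_step: "reach U E x y \<Longrightarrow> y \<in> U \<Longrightarrow> z \<in> U \<Longrightarrow> E y z \<Longrightarrow> reach U E x z"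
  unfolding reach_def by (simp add: rtranclp.rtrancl_into_rtrancl)

lemma reach_trans: "reach U E x y \<Longrightarrow> reach U E y z \<Longrightarrow> reach U E x z"
  unfolding reach_def by simp

lemma reach_sym:
  assumes sym: "\<And>x y. E x y \<Longrightarrow> E y x" and "reach U E x y"
  shows "reach U E y x"
  using assms(2) unfolding reach_def
proof (induction rule: rtranclp_induct)
  case (step y z)
  then show ?case using sym by (blast intro: converse_rtranclp_into_rtranclp)
qed simp

lemma reach_image:
  assumes "\<forall>x\<in>S. \<forall>y\<in>S. E x y \<longrightarrow> E' (f x) (f y)" and "reach S E x y"
  shows "reach (f ` S) E' (f x) (f y)"
  using assms(2) unfolding reach_def
proof (induction rule: rtranclp_induct)
  case (step y z)
  then have "f y \<in> f ` S" "f z \<in> f ` S" "E' (f y) (f z)" using assms(1) by auto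
  with step.IH show ?case by (simp add: rtranclp.rtrancl_into_rtrancl)
qed simp

lemma reach_within_conn_comp: "reach U E x y \<Longrightarrow> reach (conn_comp U E x) E x y"
  unfolding reach_def
proof (induction rule: rtranclp_induct)
  case (step y z)
  then have "y \<in> conn_comp U E x" "z \<in> conn_comp U E x"
    by (simp_all add: conn_comp_def reach_def rtranclp.rtrancl_into_rtrancl)
  with step show ?case by (simp add: rtranclp.rtrancl_into_rtrancl)
qed simp

lemma reach_finite_support:
  assumes "reach U E a b" "a \<in> U"
  shows "\<exists>F. finite F \<and> F \<subseteq> U \<and> a \<in> F \<and> reach F E a b"
  using assms(1) unfolding reach_def
proof (induction rule: rtranclp_induct)
  case base
  show ?case using assms(2) by (intro exI[of _ "{a}"]) simp
next
  case (step y z)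
  then obtain F where F: "finite F" "F \<subseteq> U" "a \<in> F" "reach F E a y" by (auto simp: reach_def)
  then have "reach (insert z F) E a y" by (blast intro: reach_mono)
  moreover have "y \<in> insert z F" using reach_closed[OF F(4,3)] by simp
  ultimately have "reach (insert z F) E a z" using step(2) by (blast intro: reach_step)
  then show ?case using F step(2) by (intro exI[of _ "insert z F"]) (simp add: reach_def)
qed

lemma connected_in_iff_reach:
  "connected_in E S \<longleftrightarrow> S \<noteq> {} \<and> (\<forall>x\<in>S. \<forall>y\<in>S. reach S E x y)"
  by (simp add: connected_in_def reach_def)

lemma graph_sym: "graph V E \<Longrightarrow> E x y \<Longrightarrow> E y x"
  by (simp add: graph_def)

lemma graph_edge_in: "graph V E \<Longrightarrow> E x y \<Longrightarrow> x \<in> V \<and> y \<in> V"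
  by (simp add: graph_def)

lemma connected_in_image:
  assumes "\<forall>x\<in>S. \<forall>y\<in>S. E x y \<longrightarrow> E' (f x) (f y)" and "connected_in E S"
  shows "connected_in E' (f ` S)"
  using assms(2) reach_image[of S E E' f, OF assms(1)] by (fastforce simp: connected_in_iff_reach)

lemma connected_in_subset_conn_comp:
  "connected_in E S \<Longrightarrow> S \<subseteq> U \<Longrightarrow> x \<in> S \<Longrightarrow> S \<subseteq> conn_comp U E x"
  unfolding connected_in_iff_reach conn_comp_def using reach_mono[of S U E x] by blast

lemma component_of_conn_comp:
  assumes G: "graph V E" and x: "x \<in> V - X"
  shows "component_of V E X (conn_comp (V - X) E x)"
proof -
  have sub: "conn_comp (V - X) E x \<subseteq> V - X"
  proof
    fix y assume "y \<in> conn_comp (V - X) E x"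
    then have "reach (V - X) E x y" by (simp add: conn_comp_def)
    then show "y \<in> V - X" using x by (rule reach_closed)
  qed
  have "reach (conn_comp (V - X) E x) E a b"
    if "a \<in> conn_comp (V - X) E x" "b \<in> conn_comp (V - X) E x" for a b
  proof -
    have "reach (conn_comp (V - X) E x) E x a" "reach (conn_comp (V - X) E x) E x b"
      using that reach_within_conn_comp by (auto simp: conn_comp_def)
    then show ?thesis by (metis reach_sym[of E, OF graph_sym[OF G]] reach_trans)
  qed
  moreover have "x \<in> conn_comp (V - X) E x" by (simp add: conn_comp_def)
  moreover have "b \<in> conn_comp (V - X) E x"
    if "a \<in> conn_comp (V - X) E x" "b \<in> V - X" "E a b" for a b
  proof -
    have "reach (V - X) E x a" using that(1) by (simp add: conn_comp_def)
    then have "reach (V - X) E x b" using that sub by (blast intro: reach_step)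
    then show ?thesis by (simp add: conn_comp_def)
  qed
  ultimately show ?thesis
    unfolding component_of_def connected_in_iff_reach using sub by (intro conjI) blast+
qed

lemma component_of_eq_conn_comp:
  assumes C: "component_of V E X C" and x: "x \<in> C"
  shows "C = conn_comp (V - X) E x"
proof
  show "C \<subseteq> conn_comp (V - X) E x"
    using C x connected_in_subset_conn_comp[of E C "V - X" x] by (auto simp: component_of_def)
  show "conn_comp (V - X) E x \<subseteq> C"
  proof
    fix y assume "y \<in> conn_comp (V - X) E x"
    then have "reach (V - X) E x y" by (simp add: conn_comp_def)
    then show "y \<in> C" unfolding reach_def
      by (induction rule: rtranclp_induct) (use x C in \<open>auto simp: component_of_def\<close>)
  qed
qed

lemma connected_in_subset_component:
  assumes K: "component_of V E X K" and S: "connected_in E S" "S \<subseteq> V - X" "S \<inter> K \<noteq> {}"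
  shows "S \<subseteq> K"
proof -
  obtain x where "x \<in> S" "x \<in> K" using S(3) by blast
  then show ?thesis
    using component_of_eq_conn_comp[OF K] connected_in_subset_conn_comp[OF S(1,2)] by blast
qed

lemma components_eq_or_disjoint:
  assumes "component_of V E X K" "component_of V E X K'"
  shows "K = K' \<or> K \<inter> K' = {}"
proof (rule disjCI)
  assume "K \<inter> K' \<noteq> {}"
  then obtain x where "x \<in> K" "x \<in> K'" by blast
  then show "K = K'" using component_of_eq_conn_comp assms by metis
qed

lemma nbhd_component_subset: "component_of V E X C \<Longrightarrow> nbhd V E C \<subseteq> X"
  by (auto simp: nbhd_def component_of_def)

lemma component_containing:
  assumes G: "graph V E" and N: "component_of V E W N" and q: "q \<in> V - (N \<union> W)"
  obtains C where "component_of V E W C" "q \<in> C" "C \<inter> N = {}"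
proof
  show C: "component_of V E W (conn_comp (V - W) E q)"
    using component_of_conn_comp[OF G] q by blast
  show "q \<in> conn_comp (V - W) E q" by (simp add: conn_comp_def)
  then show "conn_comp (V - W) E q \<inter> N = {}"
    using components_eq_or_disjoint[OF C N] q by blast
qed

section \<open>Minimal separators\<close>

definition minimal_separator :: "'a set \<Rightarrow> ('a \<Rightarrow> 'a \<Rightarrow> bool) \<Rightarrow> 'a \<Rightarrow> 'a \<Rightarrow> 'a set \<Rightarrow> bool" where
  "minimal_separator U E u v W \<longleftrightarrow> W \<subseteq> U \<and> u \<in> U - W \<and> v \<in> U - W \<and> \<not> reach (U - W) E u v \<and>
     (\<forall>w\<in>W. (\<exists>x. reach (U - W) E u x \<and> E x w) \<and> (\<exists>y. reach (U - W) E v y \<and> E y w))"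

lemma minimal_separator_remove:
  assumes "minimal_separator U E u v W" "w \<in> W"
  shows "minimal_separator (U - {w}) E u v (W - {w})"
proof -
  have "(U - {w}) - (W - {w}) = U - W" using assms(2) by blast
  then show ?thesis using assms unfolding minimal_separator_def by auto
qed

lemma minimal_separator_reach:
  assumes sym: "\<And>x y. E x y \<Longrightarrow> E y x" and W: "minimal_separator U E u v W" "w \<in> W"
  shows "reach U E u v"
proof -
  obtain x y where xy: "reach (U - W) E u x" "E x w" "reach (U - W) E v y" "E y w"
    using W unfolding minimal_separator_def by blast
  have U: "u \<in> U" "v \<in> U" "w \<in> U" using W unfolding minimal_separator_def by auto
  have ux: "reach U E u x" and vy: "reach U E v y" using xy(1,3) reach_mono[of "U - W" U] by auto
  have "x \<in> U" "y \<in> U" using reach_closed[OF ux U(1)] reach_closed[OF vy U(2)] .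
  then have "reach U E u y"
    using reach_step[OF reach_step[OF ux _ U(3) xy(2)] U(3) _ sym[OF xy(4)]] by blast
  then show ?thesis using reach_sym[of E, OF sym vy] by (rule reach_trans)
qed

lemma minimal_separator_meets_path:
  assumes "minimal_separator U E u v W" "F \<subseteq> U" "reach F E u v"
  shows "W \<inter> F \<noteq> {}"
proof
  assume "W \<inter> F = {}"
  then have "reach (U - W) E u v" using assms(2,3) reach_mono[of F "U - W"] by blast
  then show False using assms(1) by (simp add: minimal_separator_def)
qed

text \<open>There are only finitely many minimal \<open>u\<close>--\<open>v\<close> separators of a given size, even in an
  infinite graph: each of them meets a fixed finite \<open>u\<close>--\<open>v\<close> path, and deleting the common
  vertex leaves a smaller minimal separator of the remaining graph.\<close>

lemma finite_minimal_separators: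
  assumes sym: "\<And>x y. E x y \<Longrightarrow> E y x"
  shows "finite {W. minimal_separator U E u v W \<and> finite W \<and> card W = n}"
proof (induction n arbitrary: U)
  case 0
  have "{W. minimal_separator U E u v W \<and> finite W \<and> card W = 0} \<subseteq> {{}}" by auto
  then show ?case by (rule finite_subset) simp
next
  case (Suc n)
  let ?S = "\<lambda>U n. {W. minimal_separator U E u v W \<and> finite W \<and> card W = n}"
  show ?case
  proof (cases "?S U (Suc n) = {}")
    case False
    then obtain W0 w0 where W0: "minimal_separator U E u v W0" "w0 \<in> W0"
      by (auto simp: card_Suc_eq)
    then have "u \<in> U" by (simp add: minimal_separator_def)
    then obtain F where F: "finite F" "F \<subseteq> U" "reach F E u v"
      using reach_finite_support[OF minimal_separator_reach[OF sym W0]] by blast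
    have "?S U (Suc n) \<subseteq> (\<Union>w\<in>F. insert w ` ?S (U - {w}) n)"
    proof
      fix W assume W: "W \<in> ?S U (Suc n)"
      then obtain w where w: "w \<in> W" "w \<in> F"
        using minimal_separator_meets_path[OF _ F(2,3)] by blast
      then have "W - {w} \<in> ?S (U - {w}) n" using W minimal_separator_remove by auto
      moreover have "W = insert w (W - {w})" using w by blast
      ultimately show "W \<in> (\<Union>w\<in>F. insert w ` ?S (U - {w}) n)" using w by blast
    qed
    moreover have "finite (\<Union>w\<in>F. insert w ` ?S (U - {w}) n)"
      using F(1) Suc.IH by blast
    ultimately show ?thesis by (rule finite_subset)
  qed (simp only: finite.emptyI)
qed

section \<open>The poset of separations\<close>

abbreviation separator :: "'a sep \<Rightarrow> 'a set" where
  "separator s \<equiv> fst s \<inter> snd s"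

definition sep_meet :: "'a sep \<Rightarrow> 'a sep \<Rightarrow> 'a sep" where
  "sep_meet x y = (fst x \<inter> fst y, snd x \<union> snd y)"

lemma rev_sep_rev_sep [simp]: "rev_sep (rev_sep x) = x"
  by (simp add: rev_sep_def)

lemma sep_le_trans: "sep_le a b \<Longrightarrow> sep_le b c \<Longrightarrow> sep_le a c"
  by (auto simp: sep_le_def)

lemma sep_le_rev_iff: "sep_le (rev_sep a) b \<longleftrightarrow> sep_le (rev_sep b) a"
  by (auto simp: sep_le_def rev_sep_def)

lemma sep_le_rev_iff': "sep_le a (rev_sep b) \<longleftrightarrow> sep_le b (rev_sep a)"
  by (auto simp: sep_le_def rev_sep_def)

lemma sep_le_rev_mono: "sep_le a b \<Longrightarrow> sep_le (rev_sep b) (rev_sep a)"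
  by (auto simp: sep_le_def rev_sep_def)

lemma sep_meet_le1: "sep_le (sep_meet x y) x"
  and sep_meet_le2: "sep_le (sep_meet x y) y"
  by (auto simp: sep_le_def sep_meet_def)

lemma sep_meet_greatest: "sep_le u x \<Longrightarrow> sep_le u y \<Longrightarrow> sep_le u (sep_meet x y)"
  by (auto simp: sep_le_def sep_meet_def)

lemma sep_meet_commute: "sep_meet x y = sep_meet y x"
  by (auto simp: sep_meet_def)

lemma le_rev_sep_meet_rev: "sep_le x (rev_sep (sep_meet (rev_sep x) (rev_sep y)))"
  by (auto simp: sep_le_def sep_meet_def rev_sep_def)

lemma nested_sym: "nested s t \<longleftrightarrow> nested t s"
  by (auto simp: nested_def sep_le_def rev_sep_def)

lemma nested_rev: "nested t (rev_sep s) \<longleftrightarrow> nested t s"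
  by (auto simp: nested_def sep_le_def rev_sep_def)

lemma nested_if_le: "sep_le t s \<Longrightarrow> nested t s" "sep_le s t \<Longrightarrow> nested t s"
  by (simp_all add: nested_def)

lemma nested_if_le_rev: "sep_le t (rev_sep s) \<Longrightarrow> nested t s" "sep_le (rev_sep s) t \<Longrightarrow> nested t s"
  by (simp_all add: nested_def)

lemma crosses_sym: "crosses t s \<longleftrightarrow> crosses s t"
  by (simp add: crosses_def nested_sym)

lemma crosses_rev: "crosses t (rev_sep s) \<longleftrightarrow> crosses t s"
  by (simp add: crosses_def nested_rev)

lemma crossing_set_rev: "crossing_set S (rev_sep s) = crossing_set S s"
  by (simp add: crossing_set_def crosses_rev)

lemma nested_sep_meet_if_crosses:
  assumes "crosses x y" "nested t x" "nested t y"
  shows "nested t (sep_meet x y)"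
proof -
  have not_nested: "\<not> nested x y" using assms(1) by (simp add: crosses_def)
  consider "sep_le x t \<or> sep_le y t" | "sep_le t (rev_sep x) \<or> sep_le t (rev_sep y)"
    | "sep_le t x" "sep_le t y" | "sep_le (rev_sep x) t" "sep_le (rev_sep y) t"
    | "sep_le t x" "sep_le (rev_sep y) t" | "sep_le (rev_sep x) t" "sep_le t y"
    using assms(2,3) unfolding nested_def by blast
  then show ?thesis
  proof cases
    case 1
    then show ?thesis using sep_le_trans sep_meet_le1 sep_meet_le2 nested_if_le(2) by metis
  next
    case 2
    then show ?thesis
      using sep_le_trans sep_meet_le1 sep_meet_le2 nested_if_le_rev(1) sep_le_rev_iff' by metis
  next
    case 3
    then show ?thesis by (simp add: nested_if_le(1) sep_meet_greatest)
  next
    case 4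
    then show ?thesis by (metis nested_def sep_le_rev_iff sep_meet_greatest)
  next
    case 5
    then show ?thesis using not_nested sep_le_trans nested_def by metis
  next
    case 6
    then show ?thesis using not_nested sep_le_trans nested_def sep_le_rev_iff by metis
  qed
qed

lemma nested_sep_meet_or_opposite:
  assumes "nested t x"
  shows "nested t (sep_meet x y) \<or> nested t (sep_meet (rev_sep x) (rev_sep y))"
proof -
  have "sep_le (rev_sep x) (rev_sep (sep_meet x y))"
    using le_rev_sep_meet_rev[of "rev_sep x" "rev_sep y"] by simp
  then show ?thesis
    using assms le_rev_sep_meet_rev[of x y] sep_meet_le1[of x y]
      sep_meet_le1[of "rev_sep x" "rev_sep y"]
    unfolding nested_def by (meson sep_le_trans)
qed

lemma crossing_set_sep_meet:
  assumes "crosses x y"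
  shows "crossing_set S (sep_meet x y) \<subseteq> crossing_set S x \<union> crossing_set S y - {y, rev_sep y}"
proof
  fix t assume "t \<in> crossing_set S (sep_meet x y)"
  then have t: "t \<in> S" "\<not> nested t (sep_meet x y)" by (simp_all add: crossing_set_def crosses_def)
  then have "\<not> nested t x \<or> \<not> nested t y" using nested_sep_meet_if_crosses[OF assms] by blast
  moreover have "t \<noteq> y" "t \<noteq> rev_sep y"
    using t(2) nested_if_le(2)[OF sep_meet_le2[of x y]] nested_rev nested_sym by metis+
  ultimately show "t \<in> crossing_set S x \<union> crossing_set S y - {y, rev_sep y}"
    using t(1) by (auto simp: crossing_set_def crosses_def)
qed

lemma crossing_set_opposite_sep_meets:
  "crossing_set S (sep_meet x y) \<inter> crossing_set S (sep_meet (rev_sep x) (rev_sep y))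
     \<subseteq> crossing_set S x \<inter> crossing_set S y"
proof
  fix t
  assume "t \<in> crossing_set S (sep_meet x y) \<inter> crossing_set S (sep_meet (rev_sep x) (rev_sep y))"
  then have t: "t \<in> S" "\<not> nested t (sep_meet x y)" "\<not> nested t (sep_meet (rev_sep x) (rev_sep y))"
    by (auto simp: crossing_set_def crosses_def)
  then have "\<not> nested t x" using nested_sep_meet_or_opposite by blast
  moreover have "\<not> nested t y"
    using t nested_sep_meet_or_opposite[of t y x] sep_meet_commute[of y x]
      sep_meet_commute[of "rev_sep y" "rev_sep x"] by metis
  ultimately show "t \<in> crossing_set S x \<inter> crossing_set S y"
    using t(1) by (simp add: crossing_set_def crosses_def)
qed

lemma separator_sep_meets:
  assumes "fst x \<union> snd x = V" "fst y \<union> snd y = V"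
  shows "separator (sep_meet x y) \<union> separator (sep_meet (rev_sep x) (rev_sep y))
      = separator x \<union> separator y"
    and "separator (sep_meet x y) \<inter> separator (sep_meet (rev_sep x) (rev_sep y))
      = separator x \<inter> separator y"
  using assms by (auto simp: sep_meet_def rev_sep_def)

lemma is_sep_sep_meet: "is_sep V E x \<Longrightarrow> is_sep V E y \<Longrightarrow> is_sep V E (sep_meet x y)"
  unfolding is_sep_def sep_meet_def by (simp; blast)

lemma card_separator_sep_meets:
  assumes "fst x \<union> snd x = V" "fst y \<union> snd y = V" "finite (separator x)" "finite (separator y)"
  shows "card (separator (sep_meet x y)) + card (separator (sep_meet (rev_sep x) (rev_sep y)))
    = card (separator x) + card (separator y)"
proof -
  note un = separator_sep_meets(1)[OF assms(1,2)] and int = separator_sep_meets(2)[OF assms(1,2)]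
  have "finite (separator (sep_meet x y))" "finite (separator (sep_meet (rev_sep x) (rev_sep y)))"
    using un assms(3,4) by (metis finite_Un)+
  then show ?thesis using card_Un_Int un int assms(3,4) by metis
qed

lemma card_add_less_card_add:
  assumes "finite a" "finite b" "e1 \<union> e2 \<subseteq> a \<union> b - {s}" "e1 \<inter> e2 \<subseteq> a \<inter> b" "s \<in> a"
  shows "card e1 + card e2 < card a + card b"
proof -
  have fin: "finite e1" "finite e2" using assms(1-3) finite_subset by blast+
  have "card e1 + card e2 = card (e1 \<union> e2) + card (e1 \<inter> e2)" using card_Un_Int[OF fin] .
  also have "\<dots> \<le> card (a \<union> b - {s}) + card (a \<inter> b)"
    using assms(1-4) by (intro add_mono card_mono) auto
  also have "\<dots> < card (a \<union> b) + card (a \<inter> b)"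
    using assms(1,2,5) card_gt_0_iff[of "a \<union> b"] by auto
  also have "\<dots> = card a + card b" using card_Un_Int[OF assms(1,2)] by simp
  finally show ?thesis .
qed

unbundle cardinal_syntax

lemma card_le_iff_card_of: "card_le X Y \<longleftrightarrow> |X| \<le>o |Y|"
  by (simp add: card_le_def card_of_ordLeq[symmetric])

lemma card_le_trans: "card_le X Y \<Longrightarrow> card_le Y Z \<Longrightarrow> card_le X Z"
  unfolding card_le_iff_card_of by (rule ordLeq_transitive)

lemma card_le_subset: "X \<subseteq> Y \<Longrightarrow> card_le X Y"
  unfolding card_le_iff_card_of by (rule card_of_mono1)

lemma card_le_finite_iff:
  assumes "finite X" "finite Y"
  shows "card_le X Y \<longleftrightarrow> card X \<le> card Y"
proof
  assume "card_le X Y"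
  then obtain f where "inj_on f X" "f ` X \<subseteq> Y" by (auto simp: card_le_def)
  then show "card X \<le> card Y" using assms(2) by (rule card_inj_on_le)
next
  assume "card X \<le> card Y"
  then show "card_le X Y" using card_le_inj[OF assms] by (auto simp: card_le_def)
qed

lemma card_le_image_iff:
  assumes "inj_on h (X \<union> Y)"
  shows "card_le (h ` X) (h ` Y) \<longleftrightarrow> card_le X Y"
proof -
  have "|X| =o |h ` X|" "|Y| =o |h ` Y|"
    using assms by (auto intro!: card_of_ordIsoI inj_on_imp_bij_betw elim: inj_on_subset)
  then show ?thesis unfolding card_le_iff_card_of
    using ordIso_ordLeq_trans ordLeq_ordIso_trans ordIso_symmetric by metis
qed

lemma distinguishes_orientation:
  assumes "distinguishes r Q1 Q2"
  obtains x where "x = r \<or> x = rev_sep r" "rev_sep x \<in> Q1" "x \<in> Q2"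
  using assms unfolding distinguishes_def by (metis rev_sep_rev_sep)

section \<open>Separations cutting off a component\<close>

definition comp_sep :: "'a set \<Rightarrow> 'a set \<Rightarrow> 'a set \<Rightarrow> 'a sep" where
  "comp_sep V C X = (C \<union> X, V - C)"

definition full_separator :: "'a set \<Rightarrow> ('a \<Rightarrow> 'a \<Rightarrow> bool) \<Rightarrow> 'a set \<Rightarrow> bool" where
  "full_separator V E X \<longleftrightarrow> (\<forall>C. component_of V E X C \<longrightarrow> (\<forall>x\<in>X. \<exists>c\<in>C. E c x))"

lemma is_sep_rev_sep: "graph V E \<Longrightarrow> is_sep V E s \<Longrightarrow> is_sep V E (rev_sep s)"
  unfolding is_sep_def rev_sep_def graph_def by (simp add: Un_commute) blast

lemma separator_rev_sep [simp]: "separator (rev_sep s) = separator s"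
  by (auto simp: rev_sep_def)

lemma comp_sep_of_sep: "is_sep V E s \<Longrightarrow> s = comp_sep V (fst s - snd s) (separator s)"
  unfolding is_sep_def comp_sep_def by (cases s) auto

lemma
  assumes "graph V E" "component_of V E X C" "X \<subseteq> V"
  shows is_sep_comp_sep: "is_sep V E (comp_sep V C X)"
    and separator_comp_sep: "separator (comp_sep V C X) = X"
    and left_connected_comp_sep: "left_connected E (comp_sep V C X)"
proof -
  have C: "C \<subseteq> V - X" "connected_in E C" "\<forall>x\<in>C. \<forall>y\<in>V - X. E x y \<longrightarrow> y \<in> C"
    using assms(2) by (simp_all add: component_of_def)
  then show "is_sep V E (comp_sep V C X)"
    using assms(1,3) unfolding is_sep_def comp_sep_def graph_def by auto
  show "separator (comp_sep V C X) = X" unfolding comp_sep_def using C(1) assms(3) by auto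
  have "fst (comp_sep V C X) - snd (comp_sep V C X) = C"
    using C(1) assms(3) by (auto simp: comp_sep_def)
  then show "left_connected E (comp_sep V C X)" using C(2) by (simp add: left_connected_def)
qed

lemma left_connected_component:
  assumes "is_sep V E s" "left_connected E s"
  shows "component_of V E (separator s) (fst s - snd s)"
  using assms unfolding component_of_def left_connected_def is_sep_def by blast

lemma connected_in_one_side:
  assumes G: "graph V E" and s: "is_sep V E s" and C: "connected_in E C" "C \<inter> separator s = {}"
    and c: "c \<in> C" "c \<in> snd s - fst s"
  shows "C \<subseteq> snd s - fst s"
proof
  fix y assume "y \<in> C"
  then have "reach C E c y" using C(1) c(1) by (simp add: connected_in_iff_reach)
  then show "y \<in> snd s - fst s" unfolding reach_def
  proof (induction rule: rtranclp_induct)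
    case (step y z)
    then have "z \<in> V" "z \<notin> separator s" "E z y"
      using C(2) graph_edge_in[OF G] graph_sym[OF G] by blast+
    with step.IH show ?case using s unfolding is_sep_def by blast
  qed (use c in simp)
qed

lemma connected_adjacent_component_side:
  assumes G: "graph V E" and K: "component_of V E X K"
    and C: "connected_in E C" "C \<subseteq> V - X" and adj: "\<forall>w\<in>W. \<exists>c\<in>C. E c w"
  shows "(C \<subseteq> K \<and> W \<subseteq> K \<union> X) \<or> (C \<inter> K = {} \<and> W \<inter> K = {})"
proof -
  have closed: "\<forall>x\<in>K. \<forall>y\<in>V - X. E x y \<longrightarrow> y \<in> K" using K by (simp add: component_of_def)
  show ?thesis
  proof (cases "C \<inter> K = {}")
    case False
    have CK: "C \<subseteq> K" using connected_in_subset_component[OF K C(1) C(2) False] .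
    have "w \<in> K \<union> X" if w: "w \<in> W" for w
    proof -
      have "\<exists>c\<in>C. E c w" using adj w by (rule bspec)
      then obtain c where c: "c \<in> C" "E c w" ..
      have "c \<in> K" using CK c(1) by blast
      moreover have "w \<in> V" using graph_edge_in[OF G c(2)] by simp
      ultimately show ?thesis using closed c(2) by blast
    qed
    then show ?thesis using CK by blast
  next
    case True
    have "w \<notin> K" if w: "w \<in> W" for w
    proof
      assume "w \<in> K"
      have "\<exists>c\<in>C. E c w" using adj w by (rule bspec)
      then obtain c where c: "c \<in> C" "E c w" ..
      have "c \<in> V - X" using C(2) c(1) by blast
      then have "c \<in> K" using closed \<open>w \<in> K\<close> graph_sym[OF G c(2)] by blast
      then show False using True c(1) by blast
    qed
    then show ?thesis using True by blast
  qed
qed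

lemma comp_seps_nested_if_disjoint:
  assumes G: "graph V E" and K: "component_of V E X K" "X \<subseteq> V"
    and N: "component_of V E W N" "\<forall>w\<in>W. \<exists>c\<in>N. E c w" and NX: "N \<inter> X = {}"
  shows "nested (comp_sep V N W) (comp_sep V K X)"
proof -
  have Nc: "connected_in E N" "N \<subseteq> V - X" "N \<subseteq> V - W" using N(1) NX by (auto simp: component_of_def)
  have "W \<subseteq> V" using N(2) graph_edge_in[OF G] by blast
  moreover have "K \<subseteq> V" using K(1) by (auto simp: component_of_def)
  moreover note connected_adjacent_component_side[OF G K(1) Nc(1,2) N(2)]
  ultimately have "sep_le (comp_sep V N W) (comp_sep V K X) \<or>
      sep_le (comp_sep V N W) (rev_sep (comp_sep V K X))"
    using K(2) Nc(2,3) NX by (auto simp: sep_le_def comp_sep_def rev_sep_def)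
  then show ?thesis using nested_if_le nested_if_le_rev by blast
qed

lemma comp_seps_nested_same_separator:
  assumes "component_of V E X K" "component_of V E X N" "X \<subseteq> V"
  shows "nested (comp_sep V N X) (comp_sep V K X)"
proof -
  have "K \<subseteq> V - X" "N \<subseteq> V - X" using assms(1,2) by (simp_all add: component_of_def)
  with components_eq_or_disjoint[OF assms(1,2)]
  have "sep_le (comp_sep V N X) (comp_sep V K X) \<or>
      sep_le (comp_sep V N X) (rev_sep (comp_sep V K X))"
    using assms(3) by (auto simp: sep_le_def comp_sep_def rev_sep_def)
  then show ?thesis using nested_if_le nested_if_le_rev by blast
qed

text \<open>If the separator \<open>X\<close> of the second separation lies in the big side \<open>N \<union> W\<close> of the first,
  every further component of \<open>G - W\<close> lies entirely inside or outside \<open>K\<close>; a mixed situation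
  forces \<open>W \<subseteq> X\<close>, hence \<open>W = X\<close> by cardinality.\<close>

lemma comp_seps_nested_if_separator_inside:
  assumes G: "graph V E" and K: "component_of V E X K" "X \<subseteq> V" "finite X"
    and N: "component_of V E W N" "full_separator V E W" "card W = card X"
    and rest: "V - (N \<union> W) \<noteq> {}" and inside: "X \<subseteq> N \<union> W"
  shows "nested (comp_sep V N W) (comp_sep V K X)"
proof -
  have WV: "W \<subseteq> V"
  proof
    fix w assume "w \<in> W"
    moreover obtain q where "q \<in> V - (N \<union> W)" using rest by blast
    moreover note component_containing[OF G N(1) this]
    ultimately show "w \<in> V" using N(2) graph_edge_in[OF G] unfolding full_separator_def by metis
  qed
  have sides: "(q \<in> K \<and> W \<subseteq> K \<union> X) \<or> (q \<notin> K \<and> W \<inter> K = {})" if q: "q \<in> V - (N \<union> W)" for q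
  proof -
    obtain C where C: "component_of V E W C" "q \<in> C" "C \<inter> N = {}"
      using component_containing[OF G N(1) q] .
    then have "connected_in E C" "C \<subseteq> V - X" "\<forall>w\<in>W. \<exists>c\<in>C. E c w"
      using inside N(2) by (auto simp: component_of_def full_separator_def)
    from connected_adjacent_component_side[OF G K(1) this] show ?thesis using C(2) by blast
  qed
  have KV: "K \<subseteq> V - X" using K(1) by (simp add: component_of_def)
  consider "V - (N \<union> W) \<subseteq> K" | "(V - (N \<union> W)) \<inter> K = {}" | "W \<subseteq> X"
    using sides by blast
  then show ?thesis
  proof cases
    case 1
    then have "W \<subseteq> K \<union> X" using sides rest by blast
    then have "sep_le (rev_sep (comp_sep V K X)) (comp_sep V N W)"
      using 1 KV by (auto simp: sep_le_def comp_sep_def rev_sep_def)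
    then show ?thesis by (rule nested_if_le_rev(2))
  next
    case 2
    then have "W \<inter> K = {}" using sides rest by blast
    then have "sep_le (comp_sep V K X) (comp_sep V N W)"
      using 2 KV inside by (auto simp: sep_le_def comp_sep_def)
    then show ?thesis by (rule nested_if_le(2))
  next
    case 3
    then have "W = X" using K(3) N(3) by (simp add: card_subset_eq)
    then show ?thesis using comp_seps_nested_same_separator K N(1) by blast
  qed
qed

section \<open>Separations of order \<open>k\<close> distinguishing the profiles\<close>

locale kappa_profiles =
  fixes V :: "'a set" and E :: "'a \<Rightarrow> 'a \<Rightarrow> bool" and \<P> :: "'a sep set set" and k :: nat
  assumes G: "graph V E"
    and kappa: "kappa V E \<P> = enat k"
    and profiles: "\<And>P. P \<in> \<P> \<Longrightarrow> l_profile V E (k + 1) P \<and> principal_profile P"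
    and ws: "well_separable V E \<P>"
begin

abbreviation "Rk \<equiv> R V E (enat k) \<P>"
abbreviation "Rlc \<equiv> R_lc V E (enat k) \<P>"

lemma profile_orients:
  assumes "Q \<in> \<P>" "is_sep V E s" "finite (separator s)" "card (separator s) \<le> k"
  shows "s \<in> Q \<or> rev_sep s \<in> Q"
proof -
  have "sep_ord s < enat (k + 1)" using assms(3,4) by (simp add: sep_ord_def)
  then show ?thesis using profiles[OF assms(1)] assms(2) unfolding l_profile_def by blast
qed

lemma profile_rev_notin_if_le:
  assumes "Q \<in> \<P>" "x \<in> Q" "sep_le y x"
  shows "rev_sep y \<notin> Q"
proof -
  have "\<forall>A B C D. (A, B) \<in> Q \<and> sep_le (C, D) (A, B) \<longrightarrow> (D, C) \<notin> Q"
    using profiles[OF assms(1)] by (simp add: l_profile_def is_profile_def)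
  from this[rule_format, of "fst x" "snd x" "fst y" "snd y"] show ?thesis
    using assms(2,3) by (simp add: rev_sep_def)
qed

lemma profile_sep_meet_rev_notin:
  assumes "Q \<in> \<P>" "x \<in> Q" "y \<in> Q"
  shows "sep_meet (rev_sep x) (rev_sep y) \<notin> Q"
proof -
  have "\<forall>A B C D. (A, B) \<in> Q \<and> (C, D) \<in> Q \<longrightarrow> (B \<inter> D, A \<union> C) \<notin> Q"
    using profiles[OF assms(1)] by (simp add: l_profile_def is_profile_def)
  from this[rule_format, of "fst x" "snd x" "fst y" "snd y"] show ?thesis
    using assms(2,3) by (simp add: sep_meet_def rev_sep_def)
qed

lemma profile_member:
  assumes "Q \<in> \<P>" "x \<in> Q"
  shows "is_sep V E x" "finite (separator x)" "card (separator x) \<le> k"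
  using profiles[OF assms(1)] assms(2)
  by (auto simp: l_profile_def is_profile_def sep_ord_def split: if_splits)

lemma profile_member_big_side:
  assumes "Q \<in> \<P>" "x \<in> Q"
  shows "snd x - fst x \<noteq> {}"
proof -
  have "principal_profile Q" using profiles[OF assms(1)] by simp
  then have "(\<Inter>s \<in> {x}. snd s - fst s) \<noteq> {}"
    unfolding principal_profile_def using assms(2) by blast
  then show ?thesis by simp
qed

lemma kappa_le: "is_sep V E s \<Longrightarrow> distinguishes_some \<P> s \<Longrightarrow> enat k \<le> sep_ord s"
  using kappa unfolding kappa_def by (metis (mono_tags, lifting) INF_lower mem_Collect_eq)

lemma Rk_separator:
  assumes "s \<in> Rk"
  shows "is_sep V E s" "finite (separator s)" "card (separator s) = k"
proof -
  show s: "is_sep V E s" using assms by (simp add: R_def)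
  show fin: "finite (separator s)" using assms by (simp add: R_def sep_ord_def split: if_splits)
  have "sep_ord s \<le> enat k" "distinguishes_some \<P> s" using assms by (simp_all add: R_def)
  then show "card (separator s) = k" using kappa_le[OF s] fin by (simp add: sep_ord_def)
qed

lemma Rk_distinguishes:
  assumes "s \<in> Rk"
  obtains P P' where "P \<in> \<P>" "P' \<in> \<P>" "s \<in> P" "rev_sep s \<in> P'"
  using assms unfolding R_def distinguishes_some_def distinguishes_def by auto

lemma Rk_intro:
  assumes "is_sep V E s" "finite (separator s)" "card (separator s) \<le> k"
    and "P \<in> \<P>" "P' \<in> \<P>" "s \<in> P" "rev_sep s \<in> P'"
  shows "s \<in> Rk"
  using assms unfolding R_def distinguishes_some_def distinguishes_def by (auto simp: sep_ord_def)

lemma Rk_rev: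
  assumes "s \<in> Rk"
  shows "rev_sep s \<in> Rk"
proof -
  obtain P P' where "P \<in> \<P>" "P' \<in> \<P>" "s \<in> P" "rev_sep s \<in> P'"
    using Rk_distinguishes[OF assms] .
  then show ?thesis
    using Rk_separator[OF assms] is_sep_rev_sep[OF G] by (intro Rk_intro[of _ P' P]) auto
qed

lemma Rk_full_separator: "s \<in> Rk \<Longrightarrow> full_separator V E (separator s)"
  using ws nbhd_component_subset unfolding well_separable_def full_separator_def kappa nbhd_def
  by blast

lemma Rk_big_side_nonempty: "s \<in> Rk \<Longrightarrow> snd s - fst s \<noteq> {}"
  by (elim Rk_distinguishes) (rule profile_member_big_side)

lemma Rlc_Rk: "t \<in> Rlc \<Longrightarrow> t \<in> Rk"
  by (simp add: R_lc_def)

lemma Rlc_decompose: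
  assumes "t \<in> Rlc"
  obtains N W where "t = comp_sep V N W" "N = fst t - snd t" "W = separator t"
    "component_of V E W N" "full_separator V E W" "W \<subseteq> V" "finite W" "card W = k"
    "V - (N \<union> W) \<noteq> {}"
proof
  have t: "t \<in> Rk" using Rlc_Rk[OF assms] .
  have sep: "is_sep V E t" "left_connected E t" using assms by (simp_all add: R_lc_def R_def)
  show "t = comp_sep V (fst t - snd t) (separator t)" using sep(1) by (rule comp_sep_of_sep)
  show "component_of V E (separator t) (fst t - snd t)" using sep by (rule left_connected_component)
  show "full_separator V E (separator t)" "finite (separator t)" "card (separator t) = k"
    using Rk_full_separator[OF t] Rk_separator[OF t] by simp_all
  have "fst t \<union> snd t = V" using Rk_separator(1)[OF t] by (simp add: is_sep_def)
  then show "separator t \<subseteq> V" "V - ((fst t - snd t) \<union> separator t) \<noteq> {}"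
    using Rk_big_side_nonempty[OF t] by blast+
qed simp_all

lemma Rlc_nested_if_disjoint:
  assumes t: "t \<in> Rlc" and K: "component_of V E X K" "X \<subseteq> V"
    and disjoint: "X \<inter> (fst t - snd t) = {}"
  shows "nested t (comp_sep V K X)"
proof -
  obtain N W where NW: "t = comp_sep V N W" "N = fst t - snd t"
    "component_of V E W N" "full_separator V E W"
    using Rlc_decompose[OF t] by metis
  then have "\<forall>w\<in>W. \<exists>c\<in>N. E c w" by (simp add: full_separator_def)
  then show ?thesis
    using comp_seps_nested_if_disjoint[OF G K NW(3)] disjoint NW(1,2) by blast
qed

lemma Rlc_nested_if_separator_inside:
  assumes t: "t \<in> Rlc" and K: "component_of V E X K" "X \<subseteq> V" "finite X" "card X = k"
    and inside: "X \<subseteq> fst t"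
  shows "nested t (comp_sep V K X)"
proof -
  obtain N W where NW: "t = comp_sep V N W" "component_of V E W N" "full_separator V E W"
    "card W = k" "V - (N \<union> W) \<noteq> {}"
    using Rlc_decompose[OF t] by metis
  moreover have "X \<subseteq> N \<union> W" using inside NW(1) by (simp add: comp_sep_def)
  ultimately show ?thesis
    using comp_seps_nested_if_separator_inside[OF G K(1-3)] K(4) by simp
qed

lemma Rlc_crossing_shape:
  assumes r: "r \<in> Rlc" and t: "t \<in> Rlc" and cross: "crosses t r"
  obtains x1 x2 where "x1 \<in> separator r" "x2 \<in> separator r"
    "minimal_separator V E x1 x2 (separator t)"
    "t = comp_sep V (conn_comp (V - separator t) E x1) (separator t)"
proof -
  obtain K X where KX: "r = comp_sep V K X" "X = separator r" "component_of V E X K"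
    "X \<subseteq> V" "finite X" "card X = k"
    using Rlc_decompose[OF r] by metis
  obtain N W where NW: "t = comp_sep V N W" "N = fst t - snd t" "W = separator t"
    "component_of V E W N" "full_separator V E W" "W \<subseteq> V"
    using Rlc_decompose[OF t] by metis
  have not_nested: "\<not> nested t (comp_sep V K X)" using cross KX(1) by (simp add: crosses_def)
  then obtain x1 where x1: "x1 \<in> X" "x1 \<in> N"
    using Rlc_nested_if_disjoint[OF t KX(3,4)] NW(2) by blast
  from not_nested obtain x2 where x2: "x2 \<in> X" "x2 \<notin> N \<union> W"
    using Rlc_nested_if_separator_inside[OF t KX(3-6)] NW(1) by (auto simp: comp_sep_def)
  have N: "N = conn_comp (V - W) E x1" using component_of_eq_conn_comp[OF NW(4) x1(2)] .
  have x2V: "x2 \<in> V - W" using x2 KX(4) by blast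
  have "minimal_separator V E x1 x2 W"
    unfolding minimal_separator_def
  proof (intro conjI ballI)
    show "W \<subseteq> V" "x2 \<in> V - W" by (fact NW(6), fact x2V)
    show "x1 \<in> V - W" using x1(2) NW(4) by (auto simp: component_of_def)
    show "\<not> reach (V - W) E x1 x2" using x2(2) N by (simp add: conn_comp_def)
  next
    fix w assume w: "w \<in> W"
    obtain c where "c \<in> N" "E c w" using NW(4,5) w unfolding full_separator_def by blast
    then show "\<exists>x. reach (V - W) E x1 x \<and> E x w" using N by (auto simp: conn_comp_def)
    obtain d where "d \<in> conn_comp (V - W) E x2" "E d w"
      using component_of_conn_comp[OF G x2V] NW(5) w unfolding full_separator_def by blast
    then show "\<exists>y. reach (V - W) E x2 y \<and> E y w" by (auto simp: conn_comp_def)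
  qed
  moreover have "t = comp_sep V (conn_comp (V - W) E x1) W" using NW(1) N by simp
  ultimately show ?thesis using that x1(1) x2(1) unfolding KX(2) NW(3) by blast
qed

lemma finite_crossing_set:
  assumes r: "r \<in> Rlc"
  shows "finite (crossing_set Rlc r)"
proof -
  let ?X = "separator r"
  let ?seps = "\<Union>x1\<in>?X. \<Union>x2\<in>?X. {W. minimal_separator V E x1 x2 W \<and> finite W \<and> card W = k}"
  let ?f = "\<lambda>(x, W). comp_sep V (conn_comp (V - W) E x) W"
  have "finite ?X" using Rk_separator(2)[OF Rlc_Rk[OF r]] .
  then have "finite (?X \<times> ?seps)"
    using finite_minimal_separators[of E, OF graph_sym[OF G]] by blast
  moreover have "crossing_set Rlc r \<subseteq> ?f ` (?X \<times> ?seps)"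
  proof
    fix t assume "t \<in> crossing_set Rlc r"
    then have t: "t \<in> Rlc" "crosses t r" by (simp_all add: crossing_set_def)
    obtain x1 x2 where x12: "x1 \<in> ?X" "x2 \<in> ?X" "minimal_separator V E x1 x2 (separator t)"
      "t = comp_sep V (conn_comp (V - separator t) E x1) (separator t)"
      using Rlc_crossing_shape[OF r t] .
    moreover have "finite (separator t)" "card (separator t) = k"
      using Rk_separator[OF Rlc_Rk[OF t(1)]] by simp_all
    ultimately have "(x1, separator t) \<in> ?X \<times> ?seps" by blast
    then show "t \<in> ?f ` (?X \<times> ?seps)" using x12(4) by force
  qed
  ultimately show ?thesis by (rule finite_surj)
qed

lemma principal_component:
  assumes Q: "Q \<in> \<P>" and u: "u \<in> Q"
  obtains M where "component_of V E (separator u) M" "M \<subseteq> snd u - fst u"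
    "rev_sep (comp_sep V M (separator u)) \<in> Q"
proof -
  let ?Z = "separator u"
  have u_sep: "is_sep V E u" "finite ?Z" "card ?Z \<le> k" using profile_member[OF Q u] by simp_all
  then have ZV: "?Z \<subseteq> V" by (auto simp: is_sep_def)
  define F where "F = insert u {s \<in> Q. \<exists>M. component_of V E ?Z M \<and> s = comp_sep V M ?Z}"
  have "separator s = ?Z" if s: "s \<in> F" for s
  proof (cases "s = u")
    case False
    then obtain M where "component_of V E ?Z M" "s = comp_sep V M ?Z" using s by (auto simp: F_def)
    then show ?thesis using separator_comp_sep[OF G _ ZV] by simp
  qed simp
  then have "\<forall>s\<in>F. separator s = ?Z" by blast
  moreover have "F \<subseteq> Q" "F \<noteq> {}" using u by (auto simp: F_def)
  moreover have "principal_profile Q" using profiles[OF Q] by simp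
  ultimately have "(\<Inter>s\<in>F. snd s - fst s) \<noteq> {}"
    unfolding principal_profile_def by (elim allE[of _ F] allE[of _ ?Z]) simp
  then obtain v where v: "\<forall>s\<in>F. v \<in> snd s - fst s" by blast
  then have vu: "v \<in> snd u - fst u" by (simp add: F_def)
  then have "v \<in> V - ?Z" using u_sep(1) by (auto simp: is_sep_def)
  define M where "M = conn_comp (V - ?Z) E v"
  have M: "component_of V E ?Z M"
    using component_of_conn_comp[OF G \<open>v \<in> V - ?Z\<close>] by (simp add: M_def)
  have vM: "v \<in> M" by (simp add: M_def conn_comp_def)
  have "comp_sep V M ?Z \<notin> Q"
  proof
    assume "comp_sep V M ?Z \<in> Q"
    then have "comp_sep V M ?Z \<in> F" using M by (auto simp: F_def)
    then show False using v vM by (fastforce simp: comp_sep_def)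
  qed
  then have "rev_sep (comp_sep V M ?Z) \<in> Q"
    using profile_orients[OF Q is_sep_comp_sep[OF G M ZV]] separator_comp_sep[OF G M ZV] u_sep(2,3)
    by auto
  moreover have "M \<subseteq> snd u - fst u"
    using connected_in_one_side[OF G u_sep(1) _ _ vM vu] M by (auto simp: component_of_def)
  ultimately show ?thesis using that M by blast
qed

lemma nested_comp_sep_if_nested:
  assumes c: "c \<in> Rk" and M: "component_of V E (separator c) M" "M \<subseteq> fst c - snd c"
    and t: "t \<in> Rlc" and nested: "nested t c"
  shows "nested t (comp_sep V M (separator c))"
proof -
  let ?Z = "separator c"
  have c_sep: "is_sep V E c" "finite ?Z" "card ?Z = k" using Rk_separator[OF c] by simp_all
  then have ZV: "?Z \<subseteq> V" by (auto simp: is_sep_def)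
  have below: "sep_le (comp_sep V M ?Z) c"
    using M(2) c_sep(1) by (auto simp: sep_le_def comp_sep_def is_sep_def)
  consider "sep_le c t" | "sep_le t (rev_sep c)" | "sep_le t c" | "sep_le (rev_sep c) t"
    using nested by (auto simp: nested_def)
  then show ?thesis
  proof cases
    case 1
    then show ?thesis using sep_le_trans[OF below] nested_if_le(2) by blast
  next
    case 2
    then show ?thesis
      using sep_le_trans[OF _ sep_le_rev_mono[OF below]] nested_if_le_rev(1) by blast
  next
    case 3
    then have "?Z \<inter> (fst t - snd t) = {}" by (auto simp: sep_le_def)
    then show ?thesis by (rule Rlc_nested_if_disjoint[OF t M(1) ZV])
  next
    case 4
    then have "?Z \<subseteq> fst t" by (auto simp: sep_le_def rev_sep_def)
    then show ?thesis by (rule Rlc_nested_if_separator_inside[OF t M(1) ZV c_sep(2,3)])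
  qed
qed

lemma Rk_shrink:
  assumes c: "c \<in> Rk"
  obtains c' where "c' \<in> Rlc" "crossing_set Rlc c' \<subseteq> crossing_set Rlc c"
proof -
  let ?Z = "separator c"
  obtain Q2 Q1 where Q: "Q2 \<in> \<P>" "Q1 \<in> \<P>" "c \<in> Q2" "rev_sep c \<in> Q1"
    using Rk_distinguishes[OF c] .
  obtain M where "component_of V E (separator (rev_sep c)) M"
    "M \<subseteq> snd (rev_sep c) - fst (rev_sep c)" "rev_sep (comp_sep V M (separator (rev_sep c))) \<in> Q1"
    using principal_component[OF Q(2,4)] .
  then have M: "component_of V E ?Z M" "M \<subseteq> fst c - snd c" "rev_sep (comp_sep V M ?Z) \<in> Q1"
    unfolding separator_rev_sep by (simp_all add: rev_sep_def)
  have c_sep: "is_sep V E c" "finite ?Z" "card ?Z = k" using Rk_separator[OF c] by simp_all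
  then have ZV: "?Z \<subseteq> V" by (auto simp: is_sep_def)
  let ?c' = "comp_sep V M ?Z"
  have c'_sep: "is_sep V E ?c'" "separator ?c' = ?Z" "left_connected E ?c'"
    using is_sep_comp_sep[OF G M(1) ZV] separator_comp_sep[OF G M(1) ZV]
      left_connected_comp_sep[OF G M(1) ZV] by simp_all
  have "sep_le ?c' c" using M(2) c_sep(1) by (auto simp: sep_le_def comp_sep_def is_sep_def)
  then have "rev_sep ?c' \<notin> Q2" by (rule profile_rev_notin_if_le[OF Q(1,3)])
  then have "?c' \<in> Q2" using profile_orients[OF Q(1) c'_sep(1)] c'_sep(2) c_sep(2,3) by auto
  then have "?c' \<in> Rk" using Rk_intro[OF c'_sep(1) _ _ Q(1,2) _ M(3)] c'_sep(2) c_sep(2,3) by simp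
  then have "?c' \<in> Rlc" using c'_sep(3) by (simp add: R_lc_def)
  moreover have "crossing_set Rlc ?c' \<subseteq> crossing_set Rlc c"
    using nested_comp_sep_if_nested[OF c M(1,2)] by (auto simp: crossing_set_def crosses_def)
  ultimately show ?thesis by (rule that)
qed

lemma sep_meet_in_Rk_if_small:
  assumes x: "x \<in> Rk" and y: "y \<in> Rk"
    and Q1: "Q1 \<in> \<P>" "rev_sep x \<in> Q1" "rev_sep y \<in> Q1" and Q2: "Q2 \<in> \<P>" "x \<in> Q2"
    and small: "card (separator (sep_meet x y)) \<le> k"
  shows "sep_meet x y \<in> Rk"
proof -
  have sep: "is_sep V E (sep_meet x y)"
    using is_sep_sep_meet Rk_separator(1) x y by blast
  have "finite (separator x \<union> separator y)" using Rk_separator(2) x y by blast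
  then have fin: "finite (separator (sep_meet x y))"
    using separator_sep_meets(1) Rk_separator(1) x y unfolding is_sep_def by (metis finite_Un)
  have "sep_meet x y \<notin> Q1" using profile_sep_meet_rev_notin[OF Q1] by simp
  then have "rev_sep (sep_meet x y) \<in> Q1" using profile_orients[OF Q1(1) sep fin small] by blast
  moreover have "rev_sep (sep_meet x y) \<notin> Q2" using profile_rev_notin_if_le[OF Q2 sep_meet_le1] .
  then have "sep_meet x y \<in> Q2" using profile_orients[OF Q2(1) sep fin small] by blast
  ultimately show ?thesis using Rk_intro[OF sep fin small Q2(1) Q1(1)] by blast
qed

text \<open>By submodularity the two opposite corners have orders summing to \<open>2k\<close>; a corner of order
  less than \<open>k\<close> would distinguish the two profiles, contradicting the choice of \<open>k\<close>.\<close>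

lemma sep_meets_in_Rk:
  assumes x: "x \<in> Rk" and y: "y \<in> Rk"
    and Q1: "Q1 \<in> \<P>" "rev_sep x \<in> Q1" "rev_sep y \<in> Q1" and Q2: "Q2 \<in> \<P>" "x \<in> Q2" "y \<in> Q2"
  shows "sep_meet x y \<in> Rk" "sep_meet (rev_sep x) (rev_sep y) \<in> Rk"
proof -
  let ?a = "card (separator (sep_meet x y))"
  and ?b = "card (separator (sep_meet (rev_sep x) (rev_sep y)))"
  have "fst x \<union> snd x = V" "fst y \<union> snd y = V"
    using Rk_separator(1) x y by (simp_all add: is_sep_def)
  then have sum: "?a + ?b = k + k"
    using card_separator_sep_meets Rk_separator(2,3) x y by metis
  have a: "?a \<le> k \<Longrightarrow> sep_meet x y \<in> Rk"
    by (rule sep_meet_in_Rk_if_small[OF x y Q1 Q2(1,2)])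
  have b: "?b \<le> k \<Longrightarrow> sep_meet (rev_sep x) (rev_sep y) \<in> Rk"
    by (rule sep_meet_in_Rk_if_small[OF Rk_rev[OF x] Rk_rev[OF y] Q2(1)]) (use Q1 Q2 in simp_all)
  have "?a \<le> k \<Longrightarrow> ?a = k" "?b \<le> k \<Longrightarrow> ?b = k" using a b Rk_separator(3) by blast+
  then have "?a \<le> k" "?b \<le> k" using sum by (cases "?a \<le> k"; simp)+
  then show "sep_meet x y \<in> Rk" "sep_meet (rev_sep x) (rev_sep y) \<in> Rk" using a b by simp_all
qed

lemma Rk_common_distinguished_pair:
  assumes r: "r \<in> Rk" and s: "s \<in> Rk"
  obtains Q1 Q2 where "Q1 \<in> \<P>" "Q2 \<in> \<P>" "distinguishes r Q1 Q2" "distinguishes s Q1 Q2"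
proof -
  have orients: "\<And>Q. Q \<in> \<P> \<Longrightarrow> (r \<in> Q \<or> rev_sep r \<in> Q) \<and> (s \<in> Q \<or> rev_sep s \<in> Q)"
    using profile_orients Rk_separator r s by (metis order_refl)
  obtain P1 P2 where P12: "P1 \<in> \<P>" "P2 \<in> \<P>" "r \<in> P1" "rev_sep r \<in> P2"
    using Rk_distinguishes[OF r] .
  obtain P3 P4 where P34: "P3 \<in> \<P>" "P4 \<in> \<P>" "s \<in> P3" "rev_sep s \<in> P4"
    using Rk_distinguishes[OF s] .
  show ?thesis
  proof (cases "distinguishes s P1 P2")
    case True
    then show ?thesis using that P12 by (simp add: distinguishes_def)
  next
    case False
    then obtain y where y: "y \<in> P1" "y \<in> P2" "y = s \<or> y = rev_sep s"
      using orients[OF P12(1)] orients[OF P12(2)] unfolding distinguishes_def by blast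
    obtain P' where P': "P' \<in> \<P>" "rev_sep y \<in> P'" using y(3) P34 by auto
    from orients[OF P'(1)] y(3) show ?thesis
      using that[of P2 P'] that[of P1 P'] P12 y(1,2) P'
      unfolding distinguishes_def by (elim conjE disjE) simp_all
  qed
qed

lemma O_set_eq: "O_set V E \<P> = {s \<in> Rlc. \<forall>t\<in>Rlc. card_le (crossing_set Rlc s) (crossing_set Rlc t)}"
  by (simp add: O_set_def kappa Let_def)

lemma O_set_card_le_Rk:
  assumes "r \<in> O_set V E \<P>" "c \<in> Rk"
  shows "card_le (crossing_set Rlc r) (crossing_set Rlc c)"
proof -
  obtain c' where c': "c' \<in> Rlc" "crossing_set Rlc c' \<subseteq> crossing_set Rlc c"
    using Rk_shrink[OF assms(2)] .
  then have "card_le (crossing_set Rlc r) (crossing_set Rlc c')"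
    using assms(1) by (simp add: O_set_eq)
  then show ?thesis using card_le_subset[OF c'(2)] by (rule card_le_trans)
qed

text \<open>If two separations of minimal crossing number crossed, the crossing sets of two opposite
  corners would be too small: every separation crossing a corner crosses \<open>r\<close> or \<open>s\<close>, one
  crossing both corners crosses both \<open>r\<close> and \<open>s\<close>, and \<open>s\<close> crosses no corner.\<close>

lemma nested_set_O_set: "nested_set (O_set V E \<P>)"
  unfolding nested_set_def
proof (intro ballI)
  fix r s assume rO: "r \<in> O_set V E \<P>" and sO: "s \<in> O_set V E \<P>"
  have rS: "r \<in> Rlc" and sS: "s \<in> Rlc" using rO sO by (simp_all add: O_set_eq)
  show "nested r s"
  proof (rule ccontr)
    assume "\<not> nested r s"
    then have rs: "crosses r s" by (simp add: crosses_def)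
    obtain Q1 Q2 where "Q1 \<in> \<P>" "Q2 \<in> \<P>" "distinguishes r Q1 Q2" "distinguishes s Q1 Q2"
      using Rk_common_distinguished_pair[OF Rlc_Rk[OF rS] Rlc_Rk[OF sS]] .
    moreover from this obtain x y where x: "x = r \<or> x = rev_sep r" "rev_sep x \<in> Q1" "x \<in> Q2"
      and y: "y = s \<or> y = rev_sep s" "rev_sep y \<in> Q1" "y \<in> Q2"
      by (metis distinguishes_orientation)
    moreover have "x \<in> Rk" "y \<in> Rk" using x(1) y(1) Rk_rev Rlc_Rk rS sS by blast+
    ultimately have corners: "sep_meet x y \<in> Rk" "sep_meet (rev_sep x) (rev_sep y) \<in> Rk"
      using sep_meets_in_Rk by blast+
    let ?a = "crossing_set Rlc r" and ?b = "crossing_set Rlc s"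
    let ?e1 = "crossing_set Rlc (sep_meet x y)"
    let ?e2 = "crossing_set Rlc (sep_meet (rev_sep x) (rev_sep y))"
    have ab: "crossing_set Rlc x = ?a" "crossing_set Rlc (rev_sep x) = ?a"
      "crossing_set Rlc y = ?b" "crossing_set Rlc (rev_sep y) = ?b"
      using x(1) y(1) by (elim disjE; simp add: crossing_set_rev)+
    have xy: "crosses x y" "crosses (rev_sep x) (rev_sep y)"
      using rs x(1) y(1) crosses_rev crosses_sym by metis+
    have s_rev: "{y, rev_sep y} = {s, rev_sep s}" "{rev_sep y, y} = {s, rev_sep s}"
      using y(1) by auto
    have "?e1 \<union> ?e2 \<subseteq> ?a \<union> ?b - {s}"
      using crossing_set_sep_meet[OF xy(1), of Rlc] crossing_set_sep_meet[OF xy(2), of Rlc]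
      unfolding ab rev_sep_rev_sep s_rev by blast
    moreover have "?e1 \<inter> ?e2 \<subseteq> ?a \<inter> ?b"
      using crossing_set_opposite_sep_meets[of Rlc x y] ab by simp
    moreover have "s \<in> ?a" using sS rs by (simp add: crossing_set_def crosses_sym)
    moreover have fin: "finite ?a" "finite ?b" using finite_crossing_set rS sS by blast+
    ultimately have lt: "card ?e1 + card ?e2 < card ?a + card ?b"
      by (rule card_add_less_card_add[rotated 2])
    have "finite ?e1" "finite ?e2"
      using \<open>?e1 \<union> ?e2 \<subseteq> ?a \<union> ?b - {s}\<close> fin
      by (meson finite_Diff finite_UnI le_sup_iff rev_finite_subset)+
    then have "card ?a \<le> card ?e1" "card ?b \<le> card ?e2"
      using O_set_card_le_Rk[OF rO corners(1)] O_set_card_le_Rk[OF sO corners(2)]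
      by (simp_all add: card_le_finite_iff fin)
    then show False using lt by linarith
  qed
qed

lemma O_set_nonempty:
  assumes "Rk \<noteq> {}"
  shows "O_set V E \<P> \<noteq> {}"
proof -
  obtain c where "c \<in> Rk" using assms by blast
  then obtain s0 where "s0 \<in> Rlc" using Rk_shrink by metis
  then obtain s where s: "s \<in> Rlc"
    and least: "\<And>t. t \<in> Rlc \<Longrightarrow> card (crossing_set Rlc s) \<le> card (crossing_set Rlc t)"
    using ex_has_least_nat[of "\<lambda>s. s \<in> Rlc" s0 "\<lambda>s. card (crossing_set Rlc s)"] by blast
  have "card_le (crossing_set Rlc s) (crossing_set Rlc t)" if "t \<in> Rlc" for t
    using card_le_finite_iff finite_crossing_set s that least by blast
  then have "s \<in> O_set V E \<P>" using s by (simp add: O_set_eq)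
  then show ?thesis by blast
qed

end

section \<open>Invariance under isomorphisms\<close>

lemma rev_sep_map_sep: "rev_sep (map_sep f s) = map_sep f (rev_sep s)"
  by (simp add: rev_sep_def map_sep_def)

lemma crossing_set_image:
  assumes "\<And>s t. s \<in> S \<Longrightarrow> t \<in> S \<Longrightarrow> crosses (h t) (h s) \<longleftrightarrow> crosses t s" "s \<in> S"
  shows "crossing_set (h ` S) (h s) = h ` crossing_set S s"
  unfolding crossing_set_def using assms by blast

lemma min_crossing_image:
  assumes inj: "inj_on h S" and cross: "\<And>s t. s \<in> S \<Longrightarrow> t \<in> S \<Longrightarrow> crosses (h t) (h s) \<longleftrightarrow> crosses t s"
  shows "{s \<in> h ` S. \<forall>t\<in>h ` S. card_le (crossing_set (h ` S) s) (crossing_set (h ` S) t)}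
    = h ` {s \<in> S. \<forall>t\<in>S. card_le (crossing_set S s) (crossing_set S t)}"
proof -
  have key: "card_le (crossing_set (h ` S) (h s)) (crossing_set (h ` S) (h t))
      \<longleftrightarrow> card_le (crossing_set S s) (crossing_set S t)" if "s \<in> S" "t \<in> S" for s t
  proof -
    have "inj_on h (crossing_set S s \<union> crossing_set S t)"
      using inj by (rule inj_on_subset) (auto simp: crossing_set_def)
    then show ?thesis
      using card_le_image_iff crossing_set_image[OF cross] that by metis
  qed
  have "{s \<in> h ` S. \<forall>t\<in>h ` S. card_le (crossing_set (h ` S) s) (crossing_set (h ` S) t)}
      = h ` {s \<in> S. \<forall>t\<in>h ` S. card_le (crossing_set (h ` S) (h s)) (crossing_set (h ` S) t)}"
    by blast
  also have "\<dots> = h ` {s \<in> S. \<forall>t\<in>S. card_le (crossing_set S s) (crossing_set S t)}"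
    using key by (intro arg_cong[where f = "image h"] Collect_cong) blast
  finally show ?thesis .
qed

lemma R_lc_Collect: "R_lc V E \<kappa> \<P> = {s. is_sep V E s \<and> (sep_ord s < \<infinity> \<and> sep_ord s \<le> \<kappa> \<and>
    distinguishes_some \<P> s \<and> left_connected E s)}"
  by (auto simp: R_lc_def R_def)

locale graph_isomorphism =
  fixes f :: "'a \<Rightarrow> 'b" and V :: "'a set" and E and V' :: "'b set" and E'
  assumes iso: "graph_iso f V E V' E'"
begin

abbreviation "subset_pairs \<equiv> {s. fst s \<subseteq> V \<and> snd s \<subseteq> V}"

lemma inj_f: "inj_on f V" and image_V: "f ` V = V'"
  and edge_iff: "x \<in> V \<Longrightarrow> y \<in> V \<Longrightarrow> E' (f x) (f y) \<longleftrightarrow> E x y"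
  using iso by (auto simp: graph_iso_def bij_betw_def)

lemma map_sep_inj: "inj_on (map_sep f) subset_pairs"
proof (rule inj_onI)
  fix s t assume "s \<in> subset_pairs" "t \<in> subset_pairs" "map_sep f s = map_sep f t"
  then show "s = t"
    using inj_on_image_eq_iff[OF inj_f] by (simp add: map_sep_def) (metis prod.expand)
qed

lemma image_inter: "A \<subseteq> V \<Longrightarrow> B \<subseteq> V \<Longrightarrow> f ` A \<inter> f ` B = f ` (A \<inter> B)"
  by (simp add: inj_on_image_Int[OF inj_f])

lemma image_diff: "A \<subseteq> V \<Longrightarrow> B \<subseteq> V \<Longrightarrow> f ` A - f ` B = f ` (A - B)"
  using inj_on_image_set_diff[OF inj_f, of A B] by blast

lemma image_subset_image_iff: "A \<subseteq> V \<Longrightarrow> B \<subseteq> V \<Longrightarrow> f ` A \<subseteq> f ` B \<longleftrightarrow> A \<subseteq> B"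
  using inj_on_image_mem_iff[OF inj_f] by blast

lemma is_sep_map_sep_iff:
  assumes "s \<in> subset_pairs"
  shows "is_sep V' E' (map_sep f s) \<longleftrightarrow> is_sep V E s"
proof -
  obtain A B where AB: "s = (A, B)" "A \<subseteq> V" "B \<subseteq> V" using assms by (cases s) auto
  have "f ` A \<union> f ` B = V' \<longleftrightarrow> A \<union> B = V"
    using inj_on_image_eq_iff[OF inj_f, of "A \<union> B" V] AB image_V by (simp add: image_Un)
  moreover have "(\<exists>x\<in>f ` A - f ` B. \<exists>y\<in>f ` B - f ` A. E' x y) \<longleftrightarrow> (\<exists>x\<in>A - B. \<exists>y\<in>B - A. E x y)"
    unfolding image_diff[OF AB(2,3)] image_diff[OF AB(3,2)] using edge_iff AB by blast
  ultimately show ?thesis by (simp add: AB(1) is_sep_def map_sep_def)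
qed

lemma sep_ord_map_sep:
  assumes "s \<in> subset_pairs"
  shows "sep_ord (map_sep f s) = sep_ord s"
proof -
  have "inj_on f (separator s)" using assms inj_on_subset[OF inj_f] by blast
  moreover have "separator (map_sep f s) = f ` separator s"
    using assms image_inter by (simp add: map_sep_def)
  ultimately show ?thesis by (simp add: sep_ord_def finite_image_iff card_image)
qed

lemma nested_map_sep_iff:
  "s \<in> subset_pairs \<Longrightarrow> t \<in> subset_pairs \<Longrightarrow> nested (map_sep f s) (map_sep f t) \<longleftrightarrow> nested s t"
  unfolding nested_def rev_sep_map_sep
  by (simp add: sep_le_def map_sep_def rev_sep_def image_subset_image_iff)

lemma crosses_map_sep_iff:
  "s \<in> subset_pairs \<Longrightarrow> t \<in> subset_pairs \<Longrightarrow> crosses (map_sep f s) (map_sep f t) \<longleftrightarrow> crosses s t"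
  by (simp add: crosses_def nested_map_sep_iff)

lemma connected_in_image_iff:
  assumes S: "S \<subseteq> V"
  shows "connected_in E' (f ` S) \<longleftrightarrow> connected_in E S"
proof
  show "connected_in E S \<Longrightarrow> connected_in E' (f ` S)"
    using S edge_iff by (intro connected_in_image) auto
next
  assume "connected_in E' (f ` S)"
  moreover have "\<forall>x\<in>f ` S. \<forall>y\<in>f ` S. E' x y \<longrightarrow> E (inv_into V f x) (inv_into V f y)"
  proof (intro ballI impI)
    fix a b assume "a \<in> f ` S" "b \<in> f ` S" "E' a b"
    then obtain x y where "x \<in> V" "y \<in> V" "a = f x" "b = f y" "E' (f x) (f y)" using S by blast
    then show "E (inv_into V f a) (inv_into V f b)" using edge_iff inv_into_f_f[OF inj_f] by simp
  qed
  ultimately have "connected_in E (inv_into V f ` f ` S)" by (rule connected_in_image[rotated])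
  then show "connected_in E S" using inv_into_image_cancel[OF inj_f S] by simp
qed

lemma left_connected_map_sep_iff:
  "s \<in> subset_pairs \<Longrightarrow> left_connected E' (map_sep f s) \<longleftrightarrow> left_connected E s"
  using image_diff[of "fst s" "snd s"] connected_in_image_iff[of "fst s - snd s"]
  by (auto simp: left_connected_def map_sep_def)

lemma distinguishes_some_map_sep_iff:
  assumes "\<forall>P\<in>\<P>. P \<subseteq> subset_pairs" "s \<in> subset_pairs"
  shows "distinguishes_some ((\<lambda>P. map_sep f ` P) ` \<P>) (map_sep f s) \<longleftrightarrow> distinguishes_some \<P> s"
proof -
  have mem: "map_sep f t \<in> map_sep f ` P \<longleftrightarrow> t \<in> P" if "P \<in> \<P>" "t \<in> subset_pairs" for P t
    by (rule inj_on_image_mem_iff[OF map_sep_inj that(2)]) (use assms(1) that(1) in blast)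
  have "rev_sep s \<in> subset_pairs" using assms(2) by (simp add: rev_sep_def)
  then show ?thesis
    unfolding distinguishes_some_def distinguishes_def rev_sep_map_sep
    using mem assms(2) by auto
qed

lemma is_sep_in_image:
  assumes "is_sep V' E' s'"
  shows "s' \<in> map_sep f ` subset_pairs"
proof -
  have "fst s' \<subseteq> f ` V" "snd s' \<subseteq> f ` V" using assms image_V by (auto simp: is_sep_def)
  then obtain A B where "A \<subseteq> V" "fst s' = f ` A" "B \<subseteq> V" "snd s' = f ` B"
    by (meson subset_imageE)
  then show ?thesis by (intro image_eqI[of _ _ "(A, B)"]) (auto simp: map_sep_def prod_eq_iff)
qed

lemma Collect_is_sep_map_sep:
  assumes "\<And>s. s \<in> subset_pairs \<Longrightarrow> \<Phi>' (map_sep f s) \<longleftrightarrow> \<Phi> s"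
  shows "{s'. is_sep V' E' s' \<and> \<Phi>' s'} = map_sep f ` {s. is_sep V E s \<and> \<Phi> s}"
proof (intro equalityI subsetI)
  fix s' assume "s' \<in> {s'. is_sep V' E' s' \<and> \<Phi>' s'}"
  then have s': "is_sep V' E' s'" "\<Phi>' s'" by simp_all
  then obtain s where "s \<in> subset_pairs" "s' = map_sep f s" using is_sep_in_image by blast
  then show "s' \<in> map_sep f ` {s. is_sep V E s \<and> \<Phi> s}"
    using s' is_sep_map_sep_iff assms by auto
next
  fix s' assume "s' \<in> map_sep f ` {s. is_sep V E s \<and> \<Phi> s}"
  then obtain s where s: "is_sep V E s" "\<Phi> s" "s' = map_sep f s" by blast
  moreover from s(1) have "s \<in> subset_pairs" by (auto simp: is_sep_def)
  ultimately show "s' \<in> {s'. is_sep V' E' s' \<and> \<Phi>' s'}" using is_sep_map_sep_iff assms by simp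
qed

context
  fixes \<P> :: "'a sep set set"
  assumes profiles_in: "\<forall>P\<in>\<P>. P \<subseteq> subset_pairs"
begin

abbreviation "\<P>' \<equiv> (\<lambda>P. map_sep f ` P) ` \<P>"

lemma kappa_map: "kappa V' E' \<P>' = kappa V E \<P>"
proof -
  have "{s'. is_sep V' E' s' \<and> distinguishes_some \<P>' s'}
      = map_sep f ` {s. is_sep V E s \<and> distinguishes_some \<P> s}"
    by (rule Collect_is_sep_map_sep) (rule distinguishes_some_map_sep_iff[OF profiles_in])
  moreover have "sep_ord ` map_sep f ` {s. is_sep V E s \<and> distinguishes_some \<P> s}
      = sep_ord ` {s. is_sep V E s \<and> distinguishes_some \<P> s}"
    unfolding image_image using sep_ord_map_sep by (auto simp: is_sep_def intro!: image_cong)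
  ultimately show ?thesis by (simp add: kappa_def)
qed

lemma R_lc_map: "R_lc V' E' \<kappa> \<P>' = map_sep f ` R_lc V E \<kappa> \<P>"
  unfolding R_lc_Collect
  by (rule Collect_is_sep_map_sep) (simp add: sep_ord_map_sep
      distinguishes_some_map_sep_iff[OF profiles_in] left_connected_map_sep_iff)

lemma O_set_map: "O_set V' E' \<P>' = map_sep f ` O_set V E \<P>"
proof -
  let ?S = "R_lc V E (kappa V E \<P>) \<P>"
  have "?S \<subseteq> subset_pairs"
  proof
    fix s assume "s \<in> ?S"
    then have "fst s \<union> snd s = V" by (simp add: R_lc_def R_def is_sep_def)
    then show "s \<in> subset_pairs" by blast
  qed
  then have "inj_on (map_sep f) ?S" by (rule inj_on_subset[OF map_sep_inj])
  moreover have "crosses (map_sep f t) (map_sep f s) \<longleftrightarrow> crosses t s" if "s \<in> ?S" "t \<in> ?S" for s t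
    using \<open>?S \<subseteq> subset_pairs\<close> that by (intro crosses_map_sep_iff) blast+
  ultimately show ?thesis
    unfolding O_set_def Let_def kappa_map R_lc_map by (rule min_crossing_image)
qed

end

end

theorem lemma2p8:
  fixes V :: "'a set" and E :: "'a \<Rightarrow> 'a \<Rightarrow> bool"
    and \<P> :: "'a sep set set" and k :: nat
  assumes G: "graph V E"
    and kappa: "kappa V E \<P> = enat k"
    and profs: "\<forall>P \<in> \<P>. l_profile V E (k + 1) P \<and> robust V E P \<and> principal_profile P"
    and ws: "well_separable V E \<P>"
    and ne: "R V E (enat k) \<P> \<noteq> {}"
  shows "nested_set (O_set V E \<P>)
     \<and> (\<forall>(V' :: 'b set) E' \<P>' f. graph V' E' \<and> graph_iso f V E V' E' \<and>
           \<P>' = (\<lambda>P. map_sep f ` P) ` \<P> \<longrightarrow> O_set V' E' \<P>' = map_sep f ` O_set V E \<P>)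
     \<and> O_set V E \<P> \<noteq> {}"
proof -
  interpret kappa_profiles V E \<P> k
    using G kappa profs ws by unfold_locales auto
  have "\<forall>P\<in>\<P>. P \<subseteq> {s. fst s \<subseteq> V \<and> snd s \<subseteq> V}"
    using profile_member(1) by (auto simp: is_sep_def)
  then have "O_set V' E' \<P>' = map_sep f ` O_set V E \<P>"
    if "graph_iso f V E V' E'" "\<P>' = (\<lambda>P. map_sep f ` P) ` \<P>"
    for V' :: "'b set" and E' \<P>' and f :: "'a \<Rightarrow> 'b"
    using graph_isomorphism.O_set_map[of f V E V' E' \<P>] that by (simp add: graph_isomorphism_def)
  then show ?thesis using nested_set_O_set O_set_nonempty[OF ne] by blast
qed

end
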